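(* Let $a>0$, $p>1$, and let $\phi\in C^1((0,a])\cap C^0([0,a])$ satisfy $\phi(0)=0$, $\phi(t)>0$ for $t\in(0,a]$, and $c_1t^{p-1+\delta}\le\phi(t)\le c_2t^{p-1+\delta}$ for all $t\in(0,a]$, for some constants $c_1,c_2,\delta>0$. Let $\eta_a(t)=\phi(t)^{-\frac1{p-1}}\big/\int_t^a\phi(\sigma)^{-\frac1{p-1}}\,d\sigma$ for $t\in(0,a)$. Then for every $u\in\mathcal E$, \[ \int_0^a|u'|^p\phi\,dt\;\ge\;\left(\frac{p-1}{p}\right)^p\int_0^a|u|^p\eta_a^p\phi\,dt, \] and the constant $\left(\frac{p-1}{p}\right)^p$ is sharp (it cannot be replaced by a larger constant).
   Context: $W^{1,p}(0,a;\phi)=\{u:[0,a]\to\mathbb R:\ u\in L^1_{\mathrm{loc}}[0,a],\ \int_0^a|u'|^p\phi\,dt<\infty\}$, with $u'$ the distributional derivative (such $u$ are absolutely continuous on $[\epsilon,a]$ for each $\epsilon\in(0,a)$), and $\mathcal E=\{u\in W^{1,p}(0,a;\phi): u(a)=0\}$. *)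

theory Defs
  imports "HOL-Analysis.Analysis"
begin

text \<open>Membership of u in W^{1,p}(0,a;phi), with g a (representative of the)
distributional derivative u'.  Since u is absolutely continuous on every [eps,a],
eps in (0,a], u' is locally integrable on (0,a] and u y - u x = int_x^y u'.\<close>
definition W1p_with_deriv ::
  "real \<Rightarrow> real \<Rightarrow> (real \<Rightarrow> real) \<Rightarrow> (real \<Rightarrow> real) \<Rightarrow> (real \<Rightarrow> real) \<Rightarrow> bool" where
  "W1p_with_deriv a p \<phi> u g \<longleftrightarrow>
     set_integrable lborel {0..a} u \<and>
     (\<forall>\<epsilon>\<in>{0<..a}. set_integrable lborel {\<epsilon>..a} g) \<and>
     (\<forall>x y. 0 < x \<and> x \<le> y \<and> y \<le> a \<longrightarrow> u y - u x = (LINT s:{x..y}|lborel. g s)) \<and>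
     set_integrable lborel {0..a} (\<lambda>t. \<bar>g t\<bar> powr p * \<phi> t)"

definition energy_space_with_deriv ::
  "real \<Rightarrow> real \<Rightarrow> (real \<Rightarrow> real) \<Rightarrow> (real \<Rightarrow> real) \<Rightarrow> (real \<Rightarrow> real) \<Rightarrow> bool" where
  "energy_space_with_deriv a p \<phi> u g \<longleftrightarrow> W1p_with_deriv a p \<phi> u g \<and> u a = 0"

definition eta :: "real \<Rightarrow> real \<Rightarrow> (real \<Rightarrow> real) \<Rightarrow> real \<Rightarrow> real" where
  "eta a p \<phi> t = \<phi> t powr (-1 / (p - 1)) / (LINT \<sigma>:{t..a}|lborel. \<phi> \<sigma> powr (-1 / (p - 1)))"

end

theory Submission
  imports Defs
begin

(*
  Write w = phi^(-1/(p-1)) and W t = int_t^a w, so that eta_a = w / W and eta_a^p phi = w W^(-p).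
  Since u t = - int_t^a u', Hoelder's inequality with the weight phi W^((p-1)/p), together with
  int_t^a w W^(-1/p) = p/(p-1) W(t)^((p-1)/p), bounds |u t|^p by a multiple of
  W(t)^((p-1)^2/p) int_t^a |u'|^p phi W^((p-1)/p). Multiplying by w W^(-p), integrating over
  (0, a) and exchanging the order of integration leaves the inner integral
  int_0^s w W^(1/p-2) <= p/(p-1) W(s)^(-(p-1)/p), which cancels the weight; the constants
  combine to (p/(p-1))^p.

  For sharpness, take u = W^beta on [a/2, b], constant on [0, a/2] and a multiple of W on
  [b, a], with beta slightly above (p-1)/p. On [a/2, b] the energy density is exactly beta^p
  times the weighted density, while the energy on [b, a] is W(b)^((beta-1)p+1), which vanishes
  as b -> a because beta > (p-1)/p.
*)

lemma AE_eq_0_if_nn_integral_powr_eq_0: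
  fixes f :: "'a \<Rightarrow> real"
  assumes "f \<in> borel_measurable M" "\<And>x. 0 \<le> f x" "p > 0"
    and "(\<integral>\<^sup>+x. ennreal (f x powr p) \<partial>M) = 0"
  shows "AE x in M. f x = 0"
proof -
  have "AE x in M. ennreal (f x powr p) = 0"
    using assms by (subst nn_integral_0_iff_AE[symmetric]) auto
  then show ?thesis
    by eventually_elim (use assms(2) in auto)
qed

lemma nn_integral_Holder:
  fixes f h :: "'a \<Rightarrow> real" and p q A B :: real
  assumes pq: "p > 1" "q > 1" "1/p + 1/q = 1"
    and meas: "f \<in> borel_measurable M" "h \<in> borel_measurable M"
    and nonneg: "\<And>x. 0 \<le> f x" "\<And>x. 0 \<le> h x"
    and A: "(\<integral>\<^sup>+x. ennreal (f x powr p) \<partial>M) \<le> ennreal A"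
    and B: "(\<integral>\<^sup>+x. ennreal (h x powr q) \<partial>M) \<le> ennreal B"
  shows "(\<integral>\<^sup>+x. ennreal (f x * h x) \<partial>M) \<le> ennreal (A powr (1/p) * B powr (1/q))"
proof (cases "A > 0 \<and> B > 0")
  case False
  then have "ennreal A = 0 \<or> ennreal B = 0"
    by (auto simp: ennreal_eq_0_iff)
  then have "(\<integral>\<^sup>+x. ennreal (f x powr p) \<partial>M) = 0 \<or> (\<integral>\<^sup>+x. ennreal (h x powr q) \<partial>M) = 0"
    using A B by auto
  then have "(AE x in M. f x = 0) \<or> (AE x in M. h x = 0)"
    using AE_eq_0_if_nn_integral_powr_eq_0[OF meas(1) nonneg(1), of p]
      AE_eq_0_if_nn_integral_powr_eq_0[OF meas(2) nonneg(2), of q] pq by auto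
  then have "AE x in M. f x = 0 \<or> h x = 0"
    by (metis (mono_tags, lifting) eventually_mono)
  then have "(\<integral>\<^sup>+x. ennreal (f x * h x) \<partial>M) = 0"
    by (subst nn_integral_0_iff_AE) (use meas in auto)
  then show ?thesis by simp
next
  case True
  define K where "K = A powr (1/p) * B powr (1/q)"
  define cf ch where "cf = K / (p * A)" and "ch = K / (q * B)"
  have coeffs: "cf > 0" "ch > 0"
    using True pq by (auto simp: K_def cf_def ch_def)
  have Young: "f x * h x \<le> cf * f x powr p + ch * h x powr q" for x
  proof -
    have "f x * h x = K * ((f x / A powr (1/p)) * (h x / B powr (1/q)))"
      using True by (simp add: K_def)
    also have "\<dots> \<le> K * ((f x / A powr (1/p)) powr p / p + (h x / B powr (1/q)) powr q / q)"
      using True pq nonneg by (intro mult_left_mono Youngs_inequality) (auto simp: K_def)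
    also have "\<dots> = cf * f x powr p + ch * h x powr q"
      using True pq nonneg by (simp add: cf_def ch_def powr_divide powr_powr field_simps)
    finally show ?thesis .
  qed
  have "(\<integral>\<^sup>+x. ennreal (f x * h x) \<partial>M)
      \<le> (\<integral>\<^sup>+x. ennreal cf * ennreal (f x powr p) + ennreal ch * ennreal (h x powr q) \<partial>M)"
    using coeffs by (intro nn_integral_mono order_trans[OF ennreal_leI[OF Young]])
      (simp add: ennreal_plus ennreal_mult)
  also have "\<dots> = ennreal cf * (\<integral>\<^sup>+x. ennreal (f x powr p) \<partial>M) + ennreal ch * (\<integral>\<^sup>+x. ennreal (h x powr q) \<partial>M)"
    using meas by (simp add: nn_integral_add nn_integral_cmult)
  also have "\<dots> \<le> ennreal cf * ennreal A + ennreal ch * ennreal B"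
    by (intro add_mono mult_left_mono A B) auto
  also have "\<dots> = ennreal K"
    using True pq coeffs by (simp add: cf_def ch_def field_simps flip: ennreal_mult ennreal_plus)
  finally show ?thesis unfolding K_def .
qed

lemma nn_integral_weighted_Holder:
  fixes g \<rho> :: "'a \<Rightarrow> real" and p A B :: real
  assumes p: "p > 1"
    and meas: "g \<in> borel_measurable M" "\<rho> \<in> borel_measurable M"
    and \<rho>_pos: "\<And>x. x \<in> space M \<Longrightarrow> 0 < \<rho> x"
    and A: "(\<integral>\<^sup>+x. ennreal (\<bar>g x\<bar> powr p * \<rho> x) \<partial>M) \<le> ennreal A"
    and B: "(\<integral>\<^sup>+x. ennreal (\<rho> x powr (-1 / (p - 1))) \<partial>M) \<le> ennreal B"
  shows "(\<integral>\<^sup>+x. ennreal \<bar>g x\<bar> \<partial>M) \<le> ennreal (A powr (1/p) * B powr ((p - 1) / p))"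
proof -
  define q where "q = p / (p - 1)"
  have q: "q > 1" "1/p + 1/q = 1" "1/q = (p - 1) / p"
    using p by (auto simp: q_def field_simps)
  let ?F = "\<lambda>x. \<bar>g x\<bar> * \<rho> x powr (1/p)" and ?H = "\<lambda>x. \<rho> x powr (-1/p)"
  have "?F x powr p = \<bar>g x\<bar> powr p * \<rho> x" "?H x powr q = \<rho> x powr (-1 / (p - 1))"
    "?F x * ?H x = \<bar>g x\<bar>" if "x \<in> space M" for x
    using \<rho>_pos[OF that] p
    by (simp_all add: powr_mult powr_powr q_def mult.assoc powr_add[symmetric])
  then have "(\<integral>\<^sup>+x. ennreal (?F x powr p) \<partial>M) = (\<integral>\<^sup>+x. ennreal (\<bar>g x\<bar> powr p * \<rho> x) \<partial>M)"
    and "(\<integral>\<^sup>+x. ennreal (?H x powr q) \<partial>M) = (\<integral>\<^sup>+x. ennreal (\<rho> x powr (-1 / (p - 1))) \<partial>M)"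
    and "(\<integral>\<^sup>+x. ennreal \<bar>g x\<bar> \<partial>M) = (\<integral>\<^sup>+x. ennreal (?F x * ?H x) \<partial>M)"
    by (auto intro!: nn_integral_cong)
  then show ?thesis
    using nn_integral_Holder[OF p q(1,2), of ?F M ?H A B] meas A B q(3) by simp
qed

lemma borel_measurable_continuous_on_ennreal_indicator:
  fixes f :: "'a::topological_space \<Rightarrow> real"
  assumes "A \<in> sets borel" "continuous_on A f"
  shows "(\<lambda>x. ennreal (f x) * indicator A x) \<in> borel_measurable borel"
proof -
  have "(\<lambda>x. ennreal (indicator A x *\<^sub>R f x)) \<in> borel_measurable borel"
    using borel_measurable_continuous_on_indicator[OF assms] by measurable
  also have "(\<lambda>x. ennreal (indicator A x *\<^sub>R f x)) = (\<lambda>x. ennreal (f x) * indicator A x)"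
    by (auto simp: indicator_def)
  finally show ?thesis .
qed

lemma borel_measurable_ennreal_indicator_set_integrable:
  fixes f :: "real \<Rightarrow> real"
  assumes "set_integrable lborel A f" "B \<in> sets borel" "B \<subseteq> A"
  shows "(\<lambda>x. ennreal (f x) * indicator B x) \<in> borel_measurable borel"
proof -
  have [measurable]: "(\<lambda>x. indicator A x *\<^sub>R f x) \<in> borel_measurable borel"
    using assms(1) unfolding set_integrable_def by auto
  have "(\<lambda>x. ennreal (indicator A x *\<^sub>R f x) * indicator B x) \<in> borel_measurable borel"
    using assms(2) by measurable
  also have "(\<lambda>x. ennreal (indicator A x *\<^sub>R f x) * indicator B x) = (\<lambda>x. ennreal (f x) * indicator B x)"
    using assms(3) by (intro ext) (auto simp: indicator_def)
  finally show ?thesis .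
qed

lemma set_integrable_eq_continuous_on:
  fixes f h :: "real \<Rightarrow> real"
  assumes "continuous_on {c..d} h" "S \<in> sets borel" "S \<subseteq> {c..d}" "\<And>t. t \<in> S \<Longrightarrow> f t = h t"
  shows "set_integrable lborel S f"
proof -
  have "set_integrable lborel S h"
    using assms(2,3) by (intro set_integrable_subset[OF borel_integrable_atLeastAtMost'[OF assms(1)]]) auto
  moreover have "set_integrable lborel S f \<longleftrightarrow> set_integrable lborel S h"
    using assms(4) by (intro set_integrable_cong) auto
  ultimately show ?thesis
    by simp
qed

lemma set_integrable_Icc_split:
  fixes f :: "real \<Rightarrow> real"
  assumes "set_integrable lborel {c..<m} f" "set_integrable lborel {m..d} f"
  shows "set_integrable lborel {c..d} f"
  using set_integrable_Un[OF assms] by (rule set_integrable_subset) auto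

lemma nn_integral_FTC_Ioo:
  fixes f G :: "real \<Rightarrow> real"
  assumes "c \<le> d" "continuous_on {c..d} G"
    and "\<And>x. x \<in> {c<..<d} \<Longrightarrow> (G has_real_derivative f x) (at x)"
    and "\<And>x. x \<in> {c<..<d} \<Longrightarrow> 0 \<le> f x"
  shows "(\<integral>\<^sup>+x. ennreal (f x) * indicator {c<..<d} x \<partial>lborel) = ennreal (G d - G c)"
proof -
  have "(f has_integral G d - G c) {c..d}"
    using assms by (intro fundamental_theorem_of_calculus_interior)
      (auto simp: has_real_derivative_iff_has_vector_derivative)
  then show ?thesis
    using assms(4) by (intro nn_integral_has_integral_lebesgue') (auto simp: has_integral_Icc_iff_Ioo)
qed

lemma nn_integral_Ioo_le_antiderivative:
  fixes f G :: "real \<Rightarrow> real"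
  assumes "c < d" "continuous_on {c<..d} G" "continuous_on {c<..<d} f"
    and deriv: "\<And>x. x \<in> {c<..<d} \<Longrightarrow> (G has_real_derivative f x) (at x)"
    and f_nonneg: "\<And>x. x \<in> {c<..<d} \<Longrightarrow> 0 \<le> f x"
    and G_nonneg: "\<And>x. x \<in> {c<..<d} \<Longrightarrow> 0 \<le> G x"
  shows "(\<integral>\<^sup>+x. ennreal (f x) * indicator {c<..<d} x \<partial>lborel) \<le> ennreal (G d)"
proof -
  define e where "e n = c + (d - c) / Suc n" for n :: nat
  have e: "c < e n" "e n \<le> d" for n
    using \<open>c < d\<close> by (auto simp: e_def field_simps intro!: mult_right_mono)
  let ?F = "\<lambda>n x. ennreal (f x) * indicator {e n<..<d} x"
  have e_antimono: "e (Suc n) \<le> e n" for n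
    using \<open>c < d\<close> by (simp add: e_def divide_left_mono)
  have "?F n x \<le> ?F (Suc n) x" for n x
    using e_antimono[of n] by (intro mult_left_mono indicator_leI) auto
  then have "incseq ?F"
    by (intro incseq_SucI le_funI)
  have below_SUP: "ennreal (f x) * indicator {c<..<d} x \<le> (SUP n. ?F n x)" for x
  proof (cases "c < x \<and> x < d")
    case True
    obtain n :: nat where "(d - c) / (x - c) < n"
      using reals_Archimedean2 by blast
    then have "e n < x"
      using True by (simp add: e_def field_simps)
    then show ?thesis
      using True by (intro SUP_upper2[of n]) (auto simp: indicator_def)
  qed auto
  have "(\<integral>\<^sup>+x. ennreal (f x) * indicator {c<..<d} x \<partial>lborel) \<le> (\<integral>\<^sup>+x. (SUP n. ?F n x) \<partial>lborel)"
    by (intro nn_integral_mono below_SUP)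
  also have "\<dots> = (SUP n. \<integral>\<^sup>+x. ?F n x \<partial>lborel)"
  proof (rule nn_integral_monotone_convergence_SUP[OF \<open>incseq ?F\<close>])
    show "?F n \<in> borel_measurable lborel" for n
      using e[of n] by (auto intro!: borel_measurable_continuous_on_ennreal_indicator
          continuous_on_subset[OF assms(3)])
  qed
  also have "\<dots> \<le> ennreal (G d)"
  proof (intro SUP_least)
    fix n
    have "(\<integral>\<^sup>+x. ?F n x \<partial>lborel) = ennreal (G d - G (e n))"
      using e[of n] assms(2) deriv f_nonneg
      by (intro nn_integral_FTC_Ioo) (auto elim!: continuous_on_subset)
    also have "\<dots> \<le> ennreal (G d)"
      using e[of n] G_nonneg[of "e n"] by (cases "e n = d") (auto intro: ennreal_leI)
    finally show "(\<integral>\<^sup>+x. ?F n x \<partial>lborel) \<le> ennreal (G d)" .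
  qed
  finally show ?thesis .
qed

lemma nn_integral_swap_triangle:
  fixes \<alpha> \<beta> :: "real \<Rightarrow> ennreal"
  assumes [measurable]: "\<alpha> \<in> borel_measurable borel" "\<beta> \<in> borel_measurable borel"
  shows "(\<integral>\<^sup>+t. \<alpha> t * (\<integral>\<^sup>+s. \<beta> s * indicator {t<..<d} s \<partial>lborel) * indicator {c<..<d} t \<partial>lborel)
       = (\<integral>\<^sup>+s. \<beta> s * (\<integral>\<^sup>+t. \<alpha> t * indicator {c<..<s} t \<partial>lborel) * indicator {c<..<d} s \<partial>lborel)"
proof -
  define K where "K t s = (if c < t \<and> t < s \<and> s < d then \<alpha> t * \<beta> s else 0)" for t s
  have inner_s: "(\<integral>\<^sup>+s. K t s \<partial>lborel)
      = \<alpha> t * (\<integral>\<^sup>+s. \<beta> s * indicator {t<..<d} s \<partial>lborel) * indicator {c<..<d} t" for t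
  proof -
    have "(\<integral>\<^sup>+s. K t s \<partial>lborel)
        = (\<integral>\<^sup>+s. (\<alpha> t * indicator {c<..<d} t) * (\<beta> s * indicator {t<..<d} s) \<partial>lborel)"
      by (intro nn_integral_cong) (auto simp: K_def indicator_def)
    also have "\<dots> = (\<alpha> t * indicator {c<..<d} t) * (\<integral>\<^sup>+s. \<beta> s * indicator {t<..<d} s \<partial>lborel)"
      by (rule nn_integral_cmult) measurable
    finally show ?thesis
      by (simp only: ac_simps)
  qed
  have inner_t: "(\<integral>\<^sup>+t. K t s \<partial>lborel)
      = \<beta> s * (\<integral>\<^sup>+t. \<alpha> t * indicator {c<..<s} t \<partial>lborel) * indicator {c<..<d} s" for s
  proof -
    have "(\<integral>\<^sup>+t. K t s \<partial>lborel)
        = (\<integral>\<^sup>+t. (\<beta> s * indicator {c<..<d} s) * (\<alpha> t * indicator {c<..<s} t) \<partial>lborel)"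
      by (intro nn_integral_cong) (auto simp: K_def indicator_def mult.commute)
    also have "\<dots> = (\<beta> s * indicator {c<..<d} s) * (\<integral>\<^sup>+t. \<alpha> t * indicator {c<..<s} t \<partial>lborel)"
      by (rule nn_integral_cmult) measurable
    finally show ?thesis
      by (simp only: ac_simps)
  qed
  have "case_prod K \<in> borel_measurable (lborel \<Otimes>\<^sub>M lborel)"
    unfolding K_def by measurable
  then have "(\<integral>\<^sup>+t. \<integral>\<^sup>+s. K t s \<partial>lborel \<partial>lborel) = (\<integral>\<^sup>+s. \<integral>\<^sup>+t. K t s \<partial>lborel \<partial>lborel)"
    by (rule lborel_pair.Fubini'[symmetric])
  then show ?thesis
    by (simp only: inner_s inner_t)
qed

lemma energy_space_with_derivD:
  assumes "energy_space_with_deriv a p \<phi> u g"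
  shows "\<And>\<epsilon>. 0 < \<epsilon> \<Longrightarrow> set_integrable lborel {\<epsilon>..a} g"
    and "\<And>t. 0 < t \<Longrightarrow> t \<le> a \<Longrightarrow> u t = - (LINT s:{t..a}|lborel. g s)"
    and "set_integrable lborel {0..a} (\<lambda>t. \<bar>g t\<bar> powr p * \<phi> t)"
proof -
  have W1p: "\<forall>\<epsilon>\<in>{0<..a}. set_integrable lborel {\<epsilon>..a} g"
    "\<forall>x y. 0 < x \<and> x \<le> y \<and> y \<le> a \<longrightarrow> u y - u x = (LINT s:{x..y}|lborel. g s)" "u a = 0"
    "set_integrable lborel {0..a} (\<lambda>t. \<bar>g t\<bar> powr p * \<phi> t)"
    using assms unfolding energy_space_with_deriv_def W1p_with_deriv_def by auto
  show "set_integrable lborel {\<epsilon>..a} g" if "0 < \<epsilon>" for \<epsilon>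
    using W1p(1) that by (cases "\<epsilon> \<le> a") auto
  show "u t = - (LINT s:{t..a}|lborel. g s)" if "0 < t" "t \<le> a" for t
    using W1p(2)[rule_format, of t a] W1p(3) that by auto
  show "set_integrable lborel {0..a} (\<lambda>t. \<bar>g t\<bar> powr p * \<phi> t)"
    by (fact W1p(4))
qed

locale hardy_weight =
  fixes a p :: real and \<phi> :: "real \<Rightarrow> real"
  assumes a_pos: "0 < a" and p_gt_1: "1 < p"
    and continuous_phi: "continuous_on {0<..a} \<phi>"
    and phi_pos: "\<And>t. t \<in> {0<..a} \<Longrightarrow> 0 < \<phi> t"
begin

definition w :: "real \<Rightarrow> real" where "w t = \<phi> t powr (-1 / (p - 1))"

definition W :: "real \<Rightarrow> real" where "W t = (LINT \<sigma>:{t..a}|lborel. w \<sigma>)"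

lemma eta_eq: "eta a p \<phi> t = w t / W t"
  unfolding eta_def w_def W_def ..

lemma w_pos: "t \<in> {0<..a} \<Longrightarrow> 0 < w t"
  using phi_pos[of t] by (simp add: w_def)

lemma phi_eq_w_powr: "t \<in> {0<..a} \<Longrightarrow> \<phi> t = w t powr (1 - p)"
proof -
  have "-1 / (p - 1) * (1 - p) = 1"
    using p_gt_1 by (simp add: field_simps)
  then show "t \<in> {0<..a} \<Longrightarrow> \<phi> t = w t powr (1 - p)"
    using phi_pos[of t] by (simp add: w_def powr_powr)
qed

lemma w_powr_mult_phi: "t \<in> {0<..a} \<Longrightarrow> w t powr p * \<phi> t = w t"
  using w_pos[of t] phi_eq_w_powr[of t] by (simp add: powr_add[symmetric])

lemma continuous_on_w: "continuous_on {0<..a} w"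
  unfolding w_def using continuous_phi phi_pos
  by (intro continuous_on_powr continuous_on_const) force+

lemma W_eq_integral:
  assumes "0 < t"
  shows "w integrable_on {t..a}" and "W t = integral {t..a} w"
proof -
  have "set_integrable lborel {t..a} w"
    using assms by (intro borel_integrable_atLeastAtMost' continuous_on_subset[OF continuous_on_w]) auto
  then show "w integrable_on {t..a}" "W t = integral {t..a} w"
    unfolding W_def using set_borel_integral_eq_integral by blast+
qed

lemma W_diff: "0 < s \<Longrightarrow> s \<le> t \<Longrightarrow> t \<le> a \<Longrightarrow> W s - W t = integral {s..t} w"
  using W_eq_integral[of s] W_eq_integral[of t] Henstock_Kurzweil_Integration.integral_combine[of s t a w]
  by simp

lemma W_a: "W a = 0"
  using W_eq_integral[OF a_pos] by simp

lemma W_nonneg: "0 < t \<Longrightarrow> 0 \<le> W t"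
  using W_eq_integral[of t] by (auto intro!: integral_nonneg intro: less_imp_le[OF w_pos])

lemma W_antimono:
  assumes "0 < s" "s \<le> t" "t \<le> a"
  shows "W t \<le> W s"
proof -
  have "0 \<le> integral {s..t} w"
    using assms by (intro integral_nonneg integrable_on_subinterval[OF W_eq_integral(1)[of s]])
      (auto intro: less_imp_le[OF w_pos])
  then show ?thesis
    using W_diff[OF assms] by simp
qed

lemma has_real_derivative_W: "t \<in> {0<..<a} \<Longrightarrow> (W has_real_derivative - w t) (at t)"
proof -
  assume t: "t \<in> {0<..<a}"
  define c where "c = t / 2"
  have c: "0 < c" "c < t" using t by (auto simp: c_def)
  have "((\<lambda>x. integral {c..x} w) has_vector_derivative w t) (at t within {c..a})"
    using t c by (intro integral_has_vector_derivative continuous_on_subset[OF continuous_on_w]) auto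
  then have "((\<lambda>x. integral {c..x} w) has_vector_derivative w t) (at t)"
    using t c by (subst (asm) at_within_interior) auto
  then have "((\<lambda>x. W c - integral {c..x} w) has_real_derivative - w t) (at t)"
    by (auto intro!: derivative_eq_intros simp: has_real_derivative_iff_has_vector_derivative)
  moreover have "t \<in> {c<..<a}"
    using t c by auto
  moreover have "W c - integral {c..x} w = W x" if "x \<in> {c<..<a}" for x
    using W_diff[of c x] that c by auto
  ultimately show ?thesis
    by (rule has_field_derivative_transform_within_open[OF _ open_greaterThanLessThan])
qed

lemma continuous_on_W: "continuous_on {0<..a} W"
proof (clarsimp simp: continuous_on_eq_continuous_within)
  fix t assume t: "0 < t" "t \<le> a"
  have "continuous_on {t/2..a} (\<lambda>x. integral {x..a} w)"
    using t by (intro indefinite_integral_continuous_1' W_eq_integral) auto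
  then have "continuous_on {t/2..a} W"
    by (rule continuous_on_eq) (use t W_eq_integral in auto)
  then have "continuous (at t within {t/2..a}) W"
    using t by (simp add: continuous_on_eq_continuous_within)
  moreover have "at t within {t/2..a} = at t within {0<..a}"
    using t by (intro at_within_nhd[of _ "{t/2<..}"]) auto
  ultimately show "continuous (at t within {0<..a}) W"
    by simp
qed

lemma W_pos: "t \<in> {0<..<a} \<Longrightarrow> 0 < W t"
proof -
  assume t: "t \<in> {0<..<a}"
  have deriv: "\<exists>y. DERIV W x :> y \<and> y < 0" if "t < x" "x < a" for x
    using that t has_real_derivative_W[of x] w_pos[of x] by auto
  have "continuous_on {t..a} W"
    using t by (intro continuous_on_subset[OF continuous_on_W]) auto
  then have "W a < W t"
    using DERIV_neg_imp_decreasing_open[of t a W, OF _ deriv] t by auto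
  then show ?thesis
    using W_a by simp
qed

lemma has_real_derivative_W_powr:
  "t \<in> {0<..<a} \<Longrightarrow> ((\<lambda>s. W s powr r) has_real_derivative - r * W t powr (r - 1) * w t) (at t)"
  using DERIV_fun_powr[OF has_real_derivative_W W_pos, of t r] by simp

lemma eta_powr_phi: "t \<in> {0<..<a} \<Longrightarrow> eta a p \<phi> t powr p * \<phi> t = w t * W t powr (-p)"
proof -
  assume t: "t \<in> {0<..<a}"
  have "eta a p \<phi> t powr p * \<phi> t = w t powr p * w t powr (1 - p) / W t powr p"
    using t w_pos[of t] W_pos[of t] phi_eq_w_powr[of t] by (simp add: eta_eq powr_divide)
  also have "\<dots> = w t * W t powr (-p)"
    using w_pos[of t] t by (simp add: powr_add[symmetric] powr_minus divide_inverse)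
  finally show ?thesis .
qed

lemma tendsto_W_at_left: "(W \<longlongrightarrow> 0) (at_left a)"
proof -
  have "(W \<longlongrightarrow> W a) (at a within {0<..a})"
    using continuous_on_W a_pos by (simp add: continuous_on_def)
  then have "(W \<longlongrightarrow> 0) (at a within {0<..<a})"
    using W_a by (auto elim: tendsto_within_subset)
  moreover have "at a within {0<..<a} = at_left a"
    using a_pos by (intro at_within_nhd[of _ "{0<..}"]) auto
  ultimately show ?thesis
    by simp
qed

lemma abs_le_nn_integral_tail:
  assumes E: "energy_space_with_deriv a p \<phi> u g" and t: "t \<in> {0<..<a}"
  shows "ennreal \<bar>u t\<bar> \<le> (\<integral>\<^sup>+s. ennreal \<bar>g s\<bar> * indicator {t<..<a} s \<partial>lborel)"
proof -
  have g: "set_integrable lborel {t..a} g" and "u t = - (LINT s:{t..a}|lborel. g s)"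
    using energy_space_with_derivD(1,2)[OF E] t by auto
  then have "ennreal \<bar>u t\<bar> = ennreal (norm (LINT s:{t..a}|lborel. g s))"
    by simp
  also have "\<dots> \<le> (\<integral>\<^sup>+s. norm (indicator {t..a} s *\<^sub>R g s) \<partial>lborel)"
    using g unfolding set_lebesgue_integral_def set_integrable_def by (rule integral_norm_bound_ennreal)
  also have "\<dots> = (\<integral>\<^sup>+s. ennreal \<bar>g s\<bar> * indicator {t<..<a} s \<partial>lborel)"
    using AE_lborel_singleton[of t] AE_lborel_singleton[of a]
    by (intro nn_integral_cong_AE) (auto simp: indicator_def)
  finally show ?thesis .
qed

lemma nn_integral_w_W_powr_tail:
  assumes t: "t \<in> {0<..<a}"
  shows "(\<integral>\<^sup>+s. ennreal (w s * W s powr (-1/p)) * indicator {t<..<a} s \<partial>lborel)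
    = ennreal (p / (p - 1) * W t powr ((p - 1) / p))"
proof -
  define G where "G s = - (p / (p - 1)) * W s powr ((p - 1) / p)" for s
  have "(\<integral>\<^sup>+s. ennreal (w s * W s powr (-1/p)) * indicator {t<..<a} s \<partial>lborel) = ennreal (G a - G t)"
  proof (rule nn_integral_FTC_Ioo)
    show "continuous_on {t..a} G"
      unfolding G_def using t p_gt_1 W_nonneg
      by (intro continuous_intros continuous_on_powr' continuous_on_subset[OF continuous_on_W]) auto
    show "(G has_real_derivative w x * W x powr (-1/p)) (at x)" if "x \<in> {t<..<a}" for x
      unfolding G_def
    proof (rule DERIV_cong[OF DERIV_cmult[OF has_real_derivative_W_powr]])
      have "(p - 1) / p - 1 = -1/p"
        using p_gt_1 by (simp add: field_simps)
      then show "- (p / (p - 1)) * (- ((p - 1) / p) * W x powr ((p - 1) / p - 1) * w x) = w x * W x powr (-1/p)"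
        using p_gt_1 by (simp add: field_simps)
    qed (use that t in auto)
  qed (use t in \<open>auto intro!: mult_nonneg_nonneg intro: less_imp_le[OF w_pos]\<close>)
  also have "G a - G t = p / (p - 1) * W t powr ((p - 1) / p)"
    using p_gt_1 by (simp add: G_def W_a)
  finally show ?thesis .
qed

lemma nn_integral_w_W_powr_head:
  assumes s: "s \<in> {0<..<a}"
  shows "(\<integral>\<^sup>+t. ennreal (w t * W t powr (1/p - 2)) * indicator {0<..<s} t \<partial>lborel)
    \<le> ennreal (p / (p - 1) * W s powr ((1 - p) / p))"
proof (rule nn_integral_Ioo_le_antiderivative)
  have W_ne_0: "x \<in> {0<..s} \<Longrightarrow> W x \<noteq> 0" for x
    using W_pos[of x] s by auto
  show "continuous_on {0<..s} (\<lambda>x. p / (p - 1) * W x powr ((1 - p) / p))"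
    using s W_ne_0 by (intro continuous_intros continuous_on_powr continuous_on_subset[OF continuous_on_W]) auto
  show "continuous_on {0<..<s} (\<lambda>x. w x * W x powr (1/p - 2))"
    using s W_ne_0
    by (intro continuous_intros continuous_on_powr continuous_on_subset[OF continuous_on_W]
        continuous_on_subset[OF continuous_on_w]) auto
  show "((\<lambda>x. p / (p - 1) * W x powr ((1 - p) / p)) has_real_derivative w x * W x powr (1/p - 2)) (at x)"
    if "x \<in> {0<..<s}" for x
  proof (rule DERIV_cong[OF DERIV_cmult[OF has_real_derivative_W_powr]])
    have "(1 - p) / p - 1 = 1/p - 2"
      using p_gt_1 by (simp add: field_simps)
    then show "p / (p - 1) * (- ((1 - p) / p) * W x powr ((1 - p) / p - 1) * w x) = w x * W x powr (1/p - 2)"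
      using p_gt_1 by (simp add: field_simps)
  qed (use that s in auto)
qed (use s p_gt_1 W_nonneg in \<open>auto intro!: mult_nonneg_nonneg intro: less_imp_le[OF w_pos]\<close>)

lemma W_powr_mult_nn_integral_head_le:
  assumes s: "s \<in> {0<..<a}"
  shows "ennreal (W s powr ((p - 1) / p)) * (\<integral>\<^sup>+t. ennreal (w t * W t powr (1/p - 2)) * indicator {0<..<s} t \<partial>lborel)
    \<le> ennreal (p / (p - 1))"
proof -
  have "(p - 1) / p + (1 - p) / p = 0"
    by (simp add: add_divide_distrib[symmetric])
  then have "W s powr ((p - 1) / p) * W s powr ((1 - p) / p) = 1"
    using W_pos[OF s] by (simp add: powr_add[symmetric])
  then have "ennreal (W s powr ((p - 1) / p)) * ennreal (p / (p - 1) * W s powr ((1 - p) / p)) = ennreal (p / (p - 1))"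
    using p_gt_1 by (simp add: mult.left_commute flip: ennreal_mult)
  then show ?thesis
    using mult_left_mono[OF nn_integral_w_W_powr_head[OF s], of "ennreal (W s powr ((p - 1) / p))"] by simp
qed

lemma abs_le_Holder_tail:
  assumes E: "energy_space_with_deriv a p \<phi> u g" and t: "t \<in> {0<..<a}"
    and A: "(\<integral>\<^sup>+s. ennreal (\<bar>g s\<bar> powr p * \<phi> s * W s powr ((p - 1) / p)) * indicator {t<..<a} s \<partial>lborel)
      \<le> ennreal A"
  shows "\<bar>u t\<bar> \<le> A powr (1/p) * (p / (p - 1) * W t powr ((p - 1) / p)) powr ((p - 1) / p)"
proof -
  define M where "M = restrict_space lborel {t<..<a}"
  \<comment> \<open>This weight is chosen so that its dual power \<open>\<rho> powr (-1/(p-1)) = w * W powr (-1/p)\<close> has an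
     explicit tail integral.\<close>
  define \<rho> where "\<rho> s = \<phi> s * W s powr ((p - 1) / p)" for s
  have nn_integral_M: "(\<integral>\<^sup>+s. f s \<partial>M) = (\<integral>\<^sup>+s. f s * indicator {t<..<a} s \<partial>lborel)" for f
    by (simp add: M_def nn_integral_restrict_space)
  have "ennreal \<bar>u t\<bar> \<le> (\<integral>\<^sup>+s. ennreal \<bar>g s\<bar> \<partial>M)"
    using abs_le_nn_integral_tail[OF E t] by (simp add: nn_integral_M)
  also have "\<dots> \<le> ennreal (A powr (1/p) * (p / (p - 1) * W t powr ((p - 1) / p)) powr ((p - 1) / p))"
  proof (rule nn_integral_weighted_Holder[OF p_gt_1])
    have "(\<lambda>s. indicator {t..a} s *\<^sub>R g s) \<in> borel_measurable lborel"
      using energy_space_with_derivD(1)[OF E, of t] t unfolding set_integrable_def by auto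
    then have "(\<lambda>s. indicator {t<..<a} s * (indicator {t..a} s *\<^sub>R g s)) \<in> borel_measurable lborel"
      by measurable
    also have "(\<lambda>s. indicator {t<..<a} s * (indicator {t..a} s *\<^sub>R g s)) = (\<lambda>s. indicator {t<..<a} s *\<^sub>R g s)"
      by (auto simp: indicator_def)
    finally show "g \<in> borel_measurable M"
      unfolding M_def by (simp add: borel_measurable_restrict_space_iff)
    have "continuous_on {t<..<a} \<rho>"
      unfolding \<rho>_def using t W_nonneg p_gt_1
      by (intro continuous_intros continuous_on_powr' continuous_on_subset[OF continuous_on_W]
          continuous_on_subset[OF continuous_phi]) auto
    then show "\<rho> \<in> borel_measurable M"
      unfolding M_def using borel_measurable_continuous_on_indicator[of "{t<..<a}" \<rho>]
      by (simp add: borel_measurable_restrict_space_iff)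
    show "0 < \<rho> s" if "s \<in> space M" for s
      using that t phi_pos[of s] W_pos[of s] by (simp add: M_def \<rho>_def)
    show "(\<integral>\<^sup>+s. ennreal (\<bar>g s\<bar> powr p * \<rho> s) \<partial>M) \<le> ennreal A"
      using A by (simp add: nn_integral_M \<rho>_def mult.assoc)
    have "\<rho> s powr (-1 / (p - 1)) = w s * W s powr (-1/p)" if "s \<in> {t<..<a}" for s
      using that t phi_pos[of s] W_pos[of s] p_gt_1 by (simp add: \<rho>_def w_def powr_mult powr_powr)
    then have "(\<integral>\<^sup>+s. ennreal (\<rho> s powr (-1 / (p - 1))) \<partial>M)
        = (\<integral>\<^sup>+s. ennreal (w s * W s powr (-1/p)) * indicator {t<..<a} s \<partial>lborel)"
      unfolding nn_integral_M by (intro nn_integral_cong) (simp split: split_indicator)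
    then show "(\<integral>\<^sup>+s. ennreal (\<rho> s powr (-1 / (p - 1))) \<partial>M) \<le> ennreal (p / (p - 1) * W t powr ((p - 1) / p))"
      using nn_integral_w_W_powr_tail[OF t] by simp
  qed
  finally show ?thesis
    by (simp add: ennreal_le_iff)
qed

lemma powr_abs_le_weighted_tail:
  assumes E: "energy_space_with_deriv a p \<phi> u g" and t: "t \<in> {0<..<a}"
  shows "ennreal (\<bar>u t\<bar> powr p) \<le> ennreal ((p / (p - 1)) powr (p - 1) * W t powr ((p - 1)^2 / p)) *
    (\<integral>\<^sup>+s. ennreal (\<bar>g s\<bar> powr p * \<phi> s * W s powr ((p - 1) / p)) * indicator {t<..<a} s \<partial>lborel)"
    (is "_ \<le> ennreal ?c * ?I")
proof (cases "?I = \<infinity>")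
  case True
  then show ?thesis
    using t p_gt_1 W_pos[of t] by (simp add: ennreal_mult_top)
next
  case False
  then obtain A where A: "?I = ennreal A" "0 \<le> A"
    by (cases ?I) auto
  define B where "B = p / (p - 1) * W t powr ((p - 1) / p)"
  have B_pos: "B > 0"
    using t p_gt_1 W_pos[of t] by (simp add: B_def)
  have "B powr (p - 1) = (p / (p - 1)) powr (p - 1) * (W t powr ((p - 1) / p)) powr (p - 1)"
    unfolding B_def by (rule powr_mult)
  then have c_eq: "?c = B powr (p - 1)"
    by (simp add: powr_powr power2_eq_square)
  have "\<bar>u t\<bar> \<le> A powr (1/p) * B powr ((p - 1) / p)"
    unfolding B_def using A by (intro abs_le_Holder_tail[OF E t]) simp
  then have "\<bar>u t\<bar> powr p \<le> (A powr (1/p) * B powr ((p - 1) / p)) powr p"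
    using p_gt_1 by (intro powr_mono2) auto
  also have "\<dots> = ?c * A"
    using A(2) B_pos p_gt_1 by (simp add: c_eq powr_mult powr_powr)
  finally have "ennreal (\<bar>u t\<bar> powr p) \<le> ennreal (?c * A)"
    by (rule ennreal_leI)
  also have "\<dots> = ennreal ?c * ?I"
    using A by (simp add: ennreal_mult)
  finally show ?thesis .
qed

lemma eta_weighted_powr_abs_le:
  assumes E: "energy_space_with_deriv a p \<phi> u g" and t: "t \<in> {0<..<a}"
  shows "ennreal (\<bar>u t\<bar> powr p * eta a p \<phi> t powr p * \<phi> t)
    \<le> ennreal ((p / (p - 1)) powr (p - 1) * (w t * W t powr (1/p - 2))) *
      (\<integral>\<^sup>+s. ennreal (\<bar>g s\<bar> powr p * \<phi> s * W s powr ((p - 1) / p)) * indicator {t<..<a} s \<partial>lborel)"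
    (is "_ \<le> _ * ?I")
proof -
  let ?c = "(p / (p - 1)) powr (p - 1)"
  have "W t powr (-p) * W t powr ((p - 1)^2 / p) = W t powr (1/p - 2)"
    using p_gt_1 W_pos[OF t] by (simp add: powr_add[symmetric] field_simps power2_eq_square)
  then have weights: "ennreal (w t * W t powr (-p)) * ennreal (?c * W t powr ((p - 1)^2 / p))
      = ennreal (?c * (w t * W t powr (1/p - 2)))"
    using w_pos[of t] t by (simp flip: ennreal_mult add: mult_ac)
  have eta_u: "\<bar>u t\<bar> powr p * eta a p \<phi> t powr p * \<phi> t = (w t * W t powr (-p)) * \<bar>u t\<bar> powr p"
    using eta_powr_phi[OF t] by (metis mult.assoc mult.commute)
  have "ennreal (\<bar>u t\<bar> powr p * eta a p \<phi> t powr p * \<phi> t)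
      = ennreal (w t * W t powr (-p)) * ennreal (\<bar>u t\<bar> powr p)"
    unfolding eta_u using w_pos[of t] t by (simp add: ennreal_mult)
  also have "\<dots> \<le> ennreal (w t * W t powr (-p)) * (ennreal (?c * W t powr ((p - 1)^2 / p)) * ?I)"
    by (intro mult_left_mono powr_abs_le_weighted_tail[OF E t]) simp
  also have "\<dots> = ennreal (?c * (w t * W t powr (1/p - 2))) * ?I"
    by (simp add: mult.assoc[symmetric] weights)
  finally show ?thesis .
qed

lemma borel_measurable_weighted_energy_density:
  assumes E: "energy_space_with_deriv a p \<phi> u g"
  shows "(\<lambda>s. ennreal (\<bar>g s\<bar> powr p * \<phi> s * W s powr r) * indicator {0<..<a} s) \<in> borel_measurable borel"
proof -
  have "(\<lambda>s. ennreal (\<bar>g s\<bar> powr p * \<phi> s) * indicator {0<..<a} s) \<in> borel_measurable borel"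
    using energy_space_with_derivD(3)[OF E] by (rule borel_measurable_ennreal_indicator_set_integrable) auto
  moreover have "(\<lambda>s. ennreal (W s powr r) * indicator {0<..<a} s) \<in> borel_measurable borel"
    using W_pos by (intro borel_measurable_continuous_on_ennreal_indicator continuous_on_powr
        continuous_on_subset[OF continuous_on_W] continuous_intros) force+
  moreover have "ennreal (\<bar>g s\<bar> powr p * \<phi> s * W s powr r) * indicator {0<..<a} s
      = ennreal (\<bar>g s\<bar> powr p * \<phi> s) * indicator {0<..<a} s * (ennreal (W s powr r) * indicator {0<..<a} s)" for s
    using phi_pos[of s] by (auto simp: indicator_def ennreal_mult)
  ultimately show ?thesis
    by simp
qed

lemma hardy_inequality:
  assumes E: "energy_space_with_deriv a p \<phi> u g"
  shows "ennreal (((p - 1) / p) powr p) *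
      (\<integral>\<^sup>+ t\<in>{0<..<a}. ennreal (\<bar>u t\<bar> powr p * eta a p \<phi> t powr p * \<phi> t) \<partial>lborel)
    \<le> (\<integral>\<^sup>+ t\<in>{0<..<a}. ennreal (\<bar>g t\<bar> powr p * \<phi> t) \<partial>lborel)"
proof -
  define q where "q = p / (p - 1)"
  have q: "q > 1" "((p - 1) / p) powr p * q powr p = 1" "q powr (p - 1) * q = q powr p"
    using p_gt_1 powr_add[of q "p - 1" 1] by (auto simp: q_def field_simps simp flip: powr_mult)
  define \<alpha> where "\<alpha> t = ennreal (q powr (p - 1) * (w t * W t powr (1/p - 2))) * indicator {0<..<a} t" for t
  define \<beta> where "\<beta> s = ennreal (\<bar>g s\<bar> powr p * \<phi> s * W s powr ((p - 1) / p)) * indicator {0<..<a} s" for s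
  have continuous_w_W: "continuous_on {0<..<a} (\<lambda>t. w t * W t powr (1/p - 2))"
    using W_pos by (intro continuous_intros continuous_on_powr continuous_on_subset[OF continuous_on_W]
        continuous_on_subset[OF continuous_on_w]) force+
  then have \<alpha>_meas: "\<alpha> \<in> borel_measurable borel"
    unfolding \<alpha>_def by (intro borel_measurable_continuous_on_ennreal_indicator continuous_on_mult_left) auto
  have \<beta>_meas: "\<beta> \<in> borel_measurable borel"
    unfolding \<beta>_def[abs_def] by (rule borel_measurable_weighted_energy_density[OF E])
  have outer: "ennreal (\<bar>u t\<bar> powr p * eta a p \<phi> t powr p * \<phi> t) * indicator {0<..<a} t
      \<le> \<alpha> t * (\<integral>\<^sup>+s. \<beta> s * indicator {t<..<a} s \<partial>lborel) * indicator {0<..<a} t" for t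
  proof (cases "t \<in> {0<..<a}")
    case t: True
    have "(\<integral>\<^sup>+s. ennreal (\<bar>g s\<bar> powr p * \<phi> s * W s powr ((p - 1) / p)) * indicator {t<..<a} s \<partial>lborel)
        = (\<integral>\<^sup>+s. \<beta> s * indicator {t<..<a} s \<partial>lborel)"
      using t by (intro nn_integral_cong) (auto simp: \<beta>_def indicator_def)
    then show ?thesis
      using eta_weighted_powr_abs_le[OF E t] t by (simp add: \<alpha>_def q_def)
  qed simp
  have inner: "\<beta> s * (\<integral>\<^sup>+t. \<alpha> t * indicator {0<..<s} t \<partial>lborel) * indicator {0<..<a} s
      \<le> ennreal (q powr p) * (ennreal (\<bar>g s\<bar> powr p * \<phi> s) * indicator {0<..<a} s)" for s
  proof (cases "s \<in> {0<..<a}")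
    case s: True
    let ?J = "\<integral>\<^sup>+t. ennreal (w t * W t powr (1/p - 2)) * indicator {0<..<s} t \<partial>lborel"
    have "(\<lambda>t. ennreal (w t * W t powr (1/p - 2)) * indicator {0<..<s} t) \<in> borel_measurable borel"
      using s by (intro borel_measurable_continuous_on_ennreal_indicator continuous_on_subset[OF continuous_w_W]) auto
    then have "(\<integral>\<^sup>+t. \<alpha> t * indicator {0<..<s} t \<partial>lborel) = ennreal (q powr (p - 1)) * ?J"
      using s by (subst nn_integral_cmult[symmetric]) (auto intro!: nn_integral_cong simp: \<alpha>_def indicator_def ennreal_mult')
    then have "\<beta> s * (\<integral>\<^sup>+t. \<alpha> t * indicator {0<..<s} t \<partial>lborel)
        = ennreal (q powr (p - 1)) * ennreal (\<bar>g s\<bar> powr p * \<phi> s) * (ennreal (W s powr ((p - 1) / p)) * ?J)"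
      using s phi_pos[of s] by (simp add: \<beta>_def ennreal_mult mult_ac)
    also have "\<dots> \<le> ennreal (q powr (p - 1)) * ennreal (\<bar>g s\<bar> powr p * \<phi> s) * ennreal q"
      using W_powr_mult_nn_integral_head_le[OF s] by (intro mult_left_mono) (auto simp: q_def)
    also have "\<dots> = ennreal (q powr p) * ennreal (\<bar>g s\<bar> powr p * \<phi> s)"
      using q s phi_pos[of s] by (simp add: mult.commute mult.left_commute flip: ennreal_mult)
    finally show ?thesis
      using s by simp
  qed simp
  have "(\<integral>\<^sup>+ t\<in>{0<..<a}. ennreal (\<bar>u t\<bar> powr p * eta a p \<phi> t powr p * \<phi> t) \<partial>lborel)
      \<le> (\<integral>\<^sup>+t. \<alpha> t * (\<integral>\<^sup>+s. \<beta> s * indicator {t<..<a} s \<partial>lborel) * indicator {0<..<a} t \<partial>lborel)"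
    by (rule nn_integral_mono[OF outer])
  also have "\<dots> = (\<integral>\<^sup>+s. \<beta> s * (\<integral>\<^sup>+t. \<alpha> t * indicator {0<..<s} t \<partial>lborel) * indicator {0<..<a} s \<partial>lborel)"
    by (rule nn_integral_swap_triangle[OF \<alpha>_meas \<beta>_meas])
  also have "\<dots> \<le> (\<integral>\<^sup>+s. ennreal (q powr p) * (ennreal (\<bar>g s\<bar> powr p * \<phi> s) * indicator {0<..<a} s) \<partial>lborel)"
    by (rule nn_integral_mono[OF inner])
  also have "\<dots> = ennreal (q powr p) * (\<integral>\<^sup>+ s\<in>{0<..<a}. ennreal (\<bar>g s\<bar> powr p * \<phi> s) \<partial>lborel)"
  proof -
    have "(\<lambda>s. ennreal (\<bar>g s\<bar> powr p * \<phi> s) * indicator {0<..<a} s) \<in> borel_measurable borel"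
      using energy_space_with_derivD(3)[OF E] by (rule borel_measurable_ennreal_indicator_set_integrable) auto
    then show ?thesis
      by (simp add: nn_integral_cmult)
  qed
  finally have "ennreal (((p - 1) / p) powr p) *
      (\<integral>\<^sup>+ t\<in>{0<..<a}. ennreal (\<bar>u t\<bar> powr p * eta a p \<phi> t powr p * \<phi> t) \<partial>lborel)
    \<le> ennreal (((p - 1) / p) powr p) * (ennreal (q powr p) * (\<integral>\<^sup>+ s\<in>{0<..<a}. ennreal (\<bar>g s\<bar> powr p * \<phi> s) \<partial>lborel))"
    by (rule mult_left_mono) simp
  then show ?thesis
    using q by (simp add: mult.assoc[symmetric] flip: ennreal_mult)
qed

end

locale hardy_test_function = hardy_weight +
  fixes \<beta> b :: real
  assumes beta: "0 < \<beta>" "\<beta> \<le> 1" and b: "a/2 < b" "b < a"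
begin

definition u :: "real \<Rightarrow> real" where
  "u t = (if t \<le> a/2 then W (a/2) powr \<beta> else if t \<le> b then W t powr \<beta> else W b powr (\<beta> - 1) * W t)"

definition g :: "real \<Rightarrow> real" where
  "g t = (if t < a/2 then 0 else if t < b then - (\<beta> * W t powr (\<beta> - 1) * w t) else - (W b powr (\<beta> - 1) * w t))"

lemma W_pos_le_b: "0 < t \<Longrightarrow> t \<le> b \<Longrightarrow> 0 < W t"
  using W_pos b by auto

lemma continuous_on_u: "continuous_on {0..a} u"
  unfolding u_def
proof (rule continuous_on_cases_le[where h="\<lambda>t. t"])
  have W: "continuous_on {t \<in> {0..a}. a/2 \<le> t} W"
    using a_pos by (intro continuous_on_subset[OF continuous_on_W]) auto
  show "continuous_on {t \<in> {0..a}. a/2 \<le> t} (\<lambda>t. if t \<le> b then W t powr \<beta> else W b powr (\<beta> - 1) * W t)"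
  proof (rule continuous_on_cases_le[where h="\<lambda>t. t"])
    show "continuous_on {t \<in> {t \<in> {0..a}. a/2 \<le> t}. t \<le> b} (\<lambda>t. W t powr \<beta>)"
      using beta W_nonneg a_pos by (intro continuous_on_powr' continuous_on_subset[OF W] continuous_intros) auto
    show "continuous_on {t \<in> {t \<in> {0..a}. a/2 \<le> t}. b \<le> t} (\<lambda>t. W b powr (\<beta> - 1) * W t)"
      by (intro continuous_intros continuous_on_subset[OF W]) auto
    show "W t powr \<beta> = W b powr (\<beta> - 1) * W t" if "t = b" for t
      using that W_pos_le_b[of b] b a_pos powr_add[of "W b" "\<beta> - 1" 1] by simp
  qed (auto intro: continuous_intros)
qed (use b in \<open>auto intro: continuous_intros\<close>)

lemma has_real_derivative_u:
  assumes "t \<in> {0<..<a}" "t \<noteq> a/2" "t \<noteq> b"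
  shows "(u has_real_derivative g t) (at t)"
proof -
  consider "t < a/2" | "a/2 < t" "t < b" | "b < t"
    using assms by linarith
  then show ?thesis
  proof cases
    case 1
    then have "((\<lambda>_. W (a/2) powr \<beta>) has_real_derivative g t) (at t)"
      by (simp add: g_def)
    then show ?thesis
      by (rule has_field_derivative_transform_within_open[of _ _ _ "{..<a/2}"]) (use 1 in \<open>auto simp: u_def\<close>)
  next
    case 2
    have "((\<lambda>s. W s powr \<beta>) has_real_derivative - \<beta> * W t powr (\<beta> - 1) * w t) (at t)"
      using assms by (intro has_real_derivative_W_powr) auto
    then have "((\<lambda>s. W s powr \<beta>) has_real_derivative g t) (at t)"
      using 2 by (simp add: g_def)
    then show ?thesis
      by (rule has_field_derivative_transform_within_open[of _ _ _ "{a/2<..<b}"]) (use 2 in \<open>auto simp: u_def\<close>)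
  next
    case 3
    have "((\<lambda>s. W b powr (\<beta> - 1) * W s) has_real_derivative W b powr (\<beta> - 1) * - w t) (at t)"
      using assms by (intro DERIV_cmult has_real_derivative_W) auto
    then have "((\<lambda>s. W b powr (\<beta> - 1) * W s) has_real_derivative g t) (at t)"
      using 3 b by (simp add: g_def)
    then show ?thesis
      by (rule has_field_derivative_transform_within_open[of _ _ _ "{b<..<a}"]) (use 3 b assms(1) in \<open>auto simp: u_def\<close>)
  qed
qed

definition v :: "real \<Rightarrow> real" where "v t = W t powr ((\<beta> - 1) * p) * w t"

lemma continuous_on_w_Icc: "0 < c \<Longrightarrow> continuous_on {c..a} w"
  by (rule continuous_on_subset[OF continuous_on_w]) auto

lemma continuous_on_W_powr_mult_w: "continuous_on {a/2..b} (\<lambda>t. W t powr r * w t)"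
proof -
  have "continuous_on {a/2..b} W" "continuous_on {a/2..b} w"
    using a_pos b by (auto intro: continuous_on_subset[OF continuous_on_W] continuous_on_subset[OF continuous_on_w])
  moreover have "\<forall>t\<in>{a/2..b}. W t \<noteq> 0"
    using W_pos_le_b a_pos by (auto simp: less_imp_neq[symmetric])
  ultimately show ?thesis
    by (intro continuous_intros continuous_on_powr) auto
qed

lemma continuous_on_v: "continuous_on {a/2..b} v"
  unfolding v_def[abs_def] by (rule continuous_on_W_powr_mult_w)

lemma abs_g_powr_mult_phi:
  assumes "t \<in> {0<..a}"
  shows "\<bar>g t\<bar> powr p * \<phi> t = (if t < a/2 then 0 else if t < b then \<beta> powr p * v t else W b powr ((\<beta> - 1) * p) * w t)"
proof -
  have "0 < w t" using w_pos assms by auto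
  moreover have "a/2 \<le> t \<Longrightarrow> t < b \<Longrightarrow> 0 < W t" using W_pos_le_b assms a_pos by auto
  ultimately show ?thesis
    using beta W_pos_le_b[of b] b a_pos w_powr_mult_phi[OF assms]
    by (auto simp: g_def v_def abs_mult powr_mult powr_powr mult_ac)
qed

lemma set_integrable_g: "set_integrable lborel {0..a} g"
proof (rule set_integrable_Icc_split)
  show "set_integrable lborel {0..<a/2} g"
    by (rule set_integrable_eq_continuous_on[of 0 "a/2" "\<lambda>_. 0"]) (auto simp: g_def)
  show "set_integrable lborel {a/2..a} g"
  proof (rule set_integrable_Icc_split)
    show "set_integrable lborel {a/2..<b} g"
      using b by (intro set_integrable_eq_continuous_on[of "a/2" b "\<lambda>t. - \<beta> * (W t powr (\<beta> - 1) * w t)"]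
          continuous_on_mult_left continuous_on_W_powr_mult_w) (auto simp: g_def)
    show "set_integrable lborel {b..a} g"
      using a_pos b
      by (intro set_integrable_eq_continuous_on[of b a "\<lambda>t. - (W b powr (\<beta> - 1) * w t)"]
          continuous_intros continuous_on_w_Icc) (auto simp: g_def)
  qed
qed

lemma set_integrable_abs_g_powr_mult_phi: "set_integrable lborel {0..a} (\<lambda>t. \<bar>g t\<bar> powr p * \<phi> t)"
proof (rule set_integrable_Icc_split)
  show "set_integrable lborel {0..<a/2} (\<lambda>t. \<bar>g t\<bar> powr p * \<phi> t)"
    by (rule set_integrable_eq_continuous_on[of 0 "a/2" "\<lambda>_. 0"]) (auto simp: g_def)
  show "set_integrable lborel {a/2..a} (\<lambda>t. \<bar>g t\<bar> powr p * \<phi> t)"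
  proof (rule set_integrable_Icc_split)
    show "set_integrable lborel {a/2..<b} (\<lambda>t. \<bar>g t\<bar> powr p * \<phi> t)"
      using a_pos b abs_g_powr_mult_phi
      by (intro set_integrable_eq_continuous_on[of "a/2" b "\<lambda>t. \<beta> powr p * v t"]
          continuous_on_mult_left continuous_on_v) auto
    show "set_integrable lborel {b..a} (\<lambda>t. \<bar>g t\<bar> powr p * \<phi> t)"
      using a_pos b abs_g_powr_mult_phi
      by (intro set_integrable_eq_continuous_on[of b a "\<lambda>t. W b powr ((\<beta> - 1) * p) * w t"]
          continuous_intros continuous_on_w_Icc) auto
  qed
qed

lemma u_diff_eq_integral_g:
  assumes "0 < x" "x \<le> y" "y \<le> a"
  shows "u y - u x = (LINT s:{x..y}|lborel. g s)"
proof -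
  have "(g has_integral u y - u x) {x..y}"
  proof (rule fundamental_theorem_of_calculus_strong[of "{a/2, b, a}"])
    show "(u has_vector_derivative g t) (at t)" if "t \<in> {x..y} - {a/2, b, a}" for t
      using has_real_derivative_u[of t] that assms
      by (auto simp: has_real_derivative_iff_has_vector_derivative)
    show "continuous_on {x..y} u"
      using assms by (intro continuous_on_subset[OF continuous_on_u]) auto
  qed (use assms in auto)
  moreover have "set_integrable lborel {x..y} g"
    using assms by (intro set_integrable_subset[OF set_integrable_g]) auto
  ultimately show ?thesis
    by (simp add: set_borel_integral_eq_integral(2) integral_unique)
qed

lemma energy_space_u_g: "energy_space_with_deriv a p \<phi> u g"
  unfolding energy_space_with_deriv_def W1p_with_deriv_def
proof (intro conjI ballI allI impI)
  show "set_integrable lborel {0..a} u"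
    by (rule borel_integrable_atLeastAtMost'[OF continuous_on_u])
  show "set_integrable lborel {\<epsilon>..a} g" if "\<epsilon> \<in> {0<..a}" for \<epsilon>
    using that by (intro set_integrable_subset[OF set_integrable_g]) auto
  show "u y - u x = (LINT s:{x..y}|lborel. g s)" if "0 < x \<and> x \<le> y \<and> y \<le> a" for x y
    using u_diff_eq_integral_g that by auto
  show "u a = 0"
    using b a_pos W_a by (simp add: u_def)
qed (rule set_integrable_abs_g_powr_mult_phi)

definition middle_energy :: real where "middle_energy = integral {a/2..b} v"

lemma v_nonneg: "t \<in> {a/2..b} \<Longrightarrow> 0 \<le> v t"
  using w_pos[of t] a_pos b by (auto simp: v_def intro!: mult_nonneg_nonneg less_imp_le)

lemma nn_integral_v: "(\<integral>\<^sup>+t. ennreal (v t) * indicator {a/2..b} t \<partial>lborel) = ennreal middle_energy"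
  unfolding middle_energy_def
  by (intro nn_integral_has_integral_lebesgue' v_nonneg integrable_integral
      integrable_continuous_interval continuous_on_v)

lemma nn_integral_w_tail: "(\<integral>\<^sup>+t. ennreal (w t) * indicator {b..a} t \<partial>lborel) = ennreal (W b)"
  using W_eq_integral[of b] a_pos b w_pos
  by (intro nn_integral_has_integral_lebesgue') (auto intro: less_imp_le simp: has_integral_integral)

lemma middle_energy_nonneg: "0 \<le> middle_energy"
  unfolding middle_energy_def by (intro integral_nonneg integrable_continuous_interval continuous_on_v v_nonneg)

lemma energy_le:
  "(\<integral>\<^sup>+ t\<in>{0<..<a}. ennreal (\<bar>g t\<bar> powr p * \<phi> t) \<partial>lborel)
    \<le> ennreal (\<beta> powr p * middle_energy + W b powr ((\<beta> - 1) * p + 1))"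
proof -
  have "ennreal (\<bar>g t\<bar> powr p * \<phi> t) * indicator {0<..<a} t
      \<le> ennreal (\<beta> powr p) * (ennreal (v t) * indicator {a/2..b} t)
        + ennreal (W b powr ((\<beta> - 1) * p)) * (ennreal (w t) * indicator {b..a} t)" for t
  proof (cases "t \<in> {0<..<a}")
    case t: True
    then have "0 < w t" by (intro w_pos) auto
    then show ?thesis
      using t b abs_g_powr_mult_phi[of t] v_nonneg[of t]
      by (auto simp: indicator_def ennreal_mult)
  qed simp
  then have "(\<integral>\<^sup>+ t\<in>{0<..<a}. ennreal (\<bar>g t\<bar> powr p * \<phi> t) \<partial>lborel)
      \<le> (\<integral>\<^sup>+t. ennreal (\<beta> powr p) * (ennreal (v t) * indicator {a/2..b} t)
        + ennreal (W b powr ((\<beta> - 1) * p)) * (ennreal (w t) * indicator {b..a} t) \<partial>lborel)"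
    by (rule nn_integral_mono)
  also have "\<dots> = ennreal (\<beta> powr p) * ennreal middle_energy + ennreal (W b powr ((\<beta> - 1) * p)) * ennreal (W b)"
  proof -
    have "(\<lambda>t. ennreal (v t) * indicator {a/2..b} t) \<in> borel_measurable borel"
      by (intro borel_measurable_continuous_on_ennreal_indicator continuous_on_v) auto
    moreover have "(\<lambda>t. ennreal (w t) * indicator {b..a} t) \<in> borel_measurable borel"
      using a_pos b by (intro borel_measurable_continuous_on_ennreal_indicator continuous_on_w_Icc) auto
    ultimately show ?thesis
      by (simp add: nn_integral_add nn_integral_cmult nn_integral_v nn_integral_w_tail)
  qed
  also have "\<dots> = ennreal (\<beta> powr p * middle_energy + W b powr ((\<beta> - 1) * p + 1))"
    using middle_energy_nonneg W_pos_le_b[of b] a_pos b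
    by (simp add: powr_add ennreal_plus flip: ennreal_mult)
  finally show ?thesis .
qed

lemma middle_energy_le_weighted:
  "ennreal middle_energy \<le> (\<integral>\<^sup>+ t\<in>{0<..<a}. ennreal (\<bar>u t\<bar> powr p * eta a p \<phi> t powr p * \<phi> t) \<partial>lborel)"
proof -
  have "ennreal (v t) * indicator {a/2..b} t
      \<le> ennreal (\<bar>u t\<bar> powr p * eta a p \<phi> t powr p * \<phi> t) * indicator {0<..<a} t" for t
  proof (cases "t \<in> {a/2..b}")
    case t: True
    then have t': "t \<in> {0<..<a}" using a_pos b by auto
    have "u t = W t powr \<beta>"
      using t by (auto simp: u_def)
    then have "\<bar>u t\<bar> powr p * eta a p \<phi> t powr p * \<phi> t = W t powr (\<beta> * p) * (w t * W t powr (-p))"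
      using eta_powr_phi[OF t'] by (simp add: powr_powr mult.assoc)
    also have "\<dots> = v t"
      using W_pos[OF t'] by (simp add: v_def powr_add[symmetric] algebra_simps)
    finally show ?thesis
      using t t' by simp
  qed simp
  then have "(\<integral>\<^sup>+t. ennreal (v t) * indicator {a/2..b} t \<partial>lborel)
      \<le> (\<integral>\<^sup>+ t\<in>{0<..<a}. ennreal (\<bar>u t\<bar> powr p * eta a p \<phi> t powr p * \<phi> t) \<partial>lborel)"
    by (rule nn_integral_mono)
  then show ?thesis
    by (simp add: nn_integral_v)
qed

lemma middle_energy_ge: "W (a/2) powr ((\<beta> - 1) * p) * (W (a/2) - W b) \<le> middle_energy"
proof -
  have "W (a/2) powr ((\<beta> - 1) * p) * (W (a/2) - W b) = integral {a/2..b} (\<lambda>t. W (a/2) powr ((\<beta> - 1) * p) * w t)"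
    using W_diff[of "a/2" b] a_pos b by simp
  also have "\<dots> \<le> middle_energy"
    unfolding middle_energy_def
  proof (rule integral_le)
    show "(\<lambda>t. W (a/2) powr ((\<beta> - 1) * p) * w t) integrable_on {a/2..b}"
      using a_pos b by (intro integrable_continuous_interval continuous_intros
          continuous_on_subset[OF continuous_on_w]) auto
    show "v integrable_on {a/2..b}"
      by (intro integrable_continuous_interval continuous_on_v)
    show "W (a/2) powr ((\<beta> - 1) * p) * w t \<le> v t" if "t \<in> {a/2..b}" for t
    proof -
      have "W (a/2) powr ((\<beta> - 1) * p) \<le> W t powr ((\<beta> - 1) * p)"
        using that a_pos b beta p_gt_1 W_pos_le_b[of t] W_antimono[of "a/2" t]
        by (intro powr_mono2') (auto simp: mult_nonpos_nonneg)
      then show ?thesis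
        using that a_pos b w_pos[of t] by (simp add: v_def)
    qed
  qed
  finally show ?thesis .
qed

lemma energy_less_weighted:
  assumes C: "\<beta> powr p < C"
    and small: "W b powr ((\<beta> - 1) * p + 1) < (C - \<beta> powr p) * (W (a/2) powr ((\<beta> - 1) * p) * (W (a/2) - W b))"
  shows "(\<integral>\<^sup>+ t\<in>{0<..<a}. ennreal (\<bar>g t\<bar> powr p * \<phi> t) \<partial>lborel)
    < ennreal C * (\<integral>\<^sup>+ t\<in>{0<..<a}. ennreal (\<bar>u t\<bar> powr p * eta a p \<phi> t powr p * \<phi> t) \<partial>lborel)"
proof -
  have C_nonneg: "0 \<le> C"
    using C powr_ge_zero[of \<beta> p] by linarith
  have "(C - \<beta> powr p) * (W (a/2) powr ((\<beta> - 1) * p) * (W (a/2) - W b)) \<le> (C - \<beta> powr p) * middle_energy"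
    using C middle_energy_ge by (intro mult_left_mono) auto
  then have less: "\<beta> powr p * middle_energy + W b powr ((\<beta> - 1) * p + 1) < C * middle_energy"
    using small by (simp add: algebra_simps)
  have "(\<integral>\<^sup>+ t\<in>{0<..<a}. ennreal (\<bar>g t\<bar> powr p * \<phi> t) \<partial>lborel)
      \<le> ennreal (\<beta> powr p * middle_energy + W b powr ((\<beta> - 1) * p + 1))"
    by (rule energy_le)
  also have "\<dots> < ennreal (C * middle_energy)"
    using less middle_energy_nonneg C_nonneg by (intro ennreal_lessI) (auto intro: order.strict_trans1[rotated])
  also have "\<dots> = ennreal C * ennreal middle_energy"
    using C_nonneg middle_energy_nonneg by (intro ennreal_mult) auto
  also have "\<dots> \<le> ennreal C * (\<integral>\<^sup>+ t\<in>{0<..<a}. ennreal (\<bar>u t\<bar> powr p * eta a p \<phi> t powr p * \<phi> t) \<partial>lborel)"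
    by (intro mult_left_mono middle_energy_le_weighted) simp
  finally show ?thesis .
qed

end

context hardy_weight
begin

lemma hardy_constant_sharp:
  assumes C: "((p - 1) / p) powr p < C"
  shows "\<exists>u g. energy_space_with_deriv a p \<phi> u g \<and>
    (\<integral>\<^sup>+ t\<in>{0<..<a}. ennreal (\<bar>g t\<bar> powr p * \<phi> t) \<partial>lborel)
      < ennreal C * (\<integral>\<^sup>+ t\<in>{0<..<a}. ennreal (\<bar>u t\<bar> powr p * eta a p \<phi> t powr p * \<phi> t) \<partial>lborel)"
proof -
  define r where "r = (p - 1) / p"
  have r: "0 < r" "r < 1"
    using p_gt_1 by (auto simp: r_def field_simps)
  have C_pos: "0 < C"
    using C powr_gt_zero[of r p] r unfolding r_def[symmetric] by linarith
  define \<beta> where "\<beta> = (r + min (C powr (1/p)) 1) / 2"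
  have "r < C powr (1/p)"
    using powr_less_mono2[of "1/p" "r powr p" C] C r p_gt_1 by (simp add: r_def[symmetric] powr_powr)
  then have \<beta>: "r < \<beta>" "\<beta> < 1" "\<beta> < C powr (1/p)"
    using r by (auto simp: \<beta>_def)
  have \<beta>_powr: "\<beta> powr p < C"
    using powr_less_mono2[of p \<beta> "C powr (1/p)"] \<beta> r p_gt_1 C_pos by (simp add: powr_powr)
  define \<kappa> where "\<kappa> = (\<beta> - 1) * p + 1"
  have \<kappa>: "0 < \<kappa>"
    using \<beta>(1) p_gt_1 by (simp add: \<kappa>_def r_def field_simps)
  define L where "L = W (a/2)"
  have L: "0 < L"
    using W_pos a_pos by (simp add: L_def)
  define D where "D = (C - \<beta> powr p) * (L powr ((\<beta> - 1) * p) * (L / 2))"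
  have D: "0 < D"
    using \<beta>_powr L by (simp add: D_def)
  have "\<forall>\<^sub>F b in at_left a. a/2 < b \<and> b < a \<and> W b < min (L / 2) (D powr (1/\<kappa>))"
    using eventually_at_left_real[of "a/2" a] order_tendstoD(2)[OF tendsto_W_at_left, of "min (L/2) (D powr (1/\<kappa>))"]
      a_pos L D by (auto elim: eventually_elim2)
  then obtain b where b: "a/2 < b" "b < a" "W b < L / 2" "W b < D powr (1/\<kappa>)"
    using eventually_happens'[OF trivial_limit_at_left_real] by force
  interpret test: hardy_test_function a p \<phi> \<beta> b
    using \<beta> r b by unfold_locales auto
  have Wb: "0 < W b"
    using W_pos b a_pos by auto
  have "W b powr \<kappa> < (D powr (1/\<kappa>)) powr \<kappa>"
    using b Wb \<kappa> by (intro powr_less_mono2) auto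
  also have "\<dots> = D"
    using D \<kappa> by (simp add: powr_powr)
  also have "D \<le> (C - \<beta> powr p) * (L powr ((\<beta> - 1) * p) * (L - W b))"
    using b \<beta>_powr L by (simp add: D_def mult_left_mono)
  finally show ?thesis
    using test.energy_space_u_g test.energy_less_weighted[OF \<beta>_powr] by (auto simp: \<kappa>_def L_def)
qed

end

theorem proposition2p3:
  fixes a p c1 c2 \<delta> :: real and \<phi> \<phi>' :: "real \<Rightarrow> real"
  assumes "a > 0" and "p > 1"
    and "continuous_on {0..a} \<phi>"
    and "\<And>t. t \<in> {0<..a} \<Longrightarrow> (\<phi> has_real_derivative \<phi>' t) (at t within {0<..a})"
    and "continuous_on {0<..a} \<phi>'"
    and "\<phi> 0 = 0"
    and "\<And>t. t \<in> {0<..a} \<Longrightarrow> \<phi> t > 0"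
    and "c1 > 0" and "c2 > 0" and "\<delta> > 0"
    and "\<And>t. t \<in> {0<..a} \<Longrightarrow> c1 * t powr (p - 1 + \<delta>) \<le> \<phi> t"
    and "\<And>t. t \<in> {0<..a} \<Longrightarrow> \<phi> t \<le> c2 * t powr (p - 1 + \<delta>)"
  shows "(\<forall>u g. energy_space_with_deriv a p \<phi> u g \<longrightarrow>
            (\<integral>\<^sup>+ t\<in>{0<..<a}. ennreal (\<bar>g t\<bar> powr p * \<phi> t) \<partial>lborel)
              \<ge> ennreal (((p - 1) / p) powr p) *
                (\<integral>\<^sup>+ t\<in>{0<..<a}. ennreal (\<bar>u t\<bar> powr p * eta a p \<phi> t powr p * \<phi> t) \<partial>lborel))
       \<and> (\<forall>C. C > ((p - 1) / p) powr p \<longrightarrow>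
            (\<exists>u g. energy_space_with_deriv a p \<phi> u g \<and>
               (\<integral>\<^sup>+ t\<in>{0<..<a}. ennreal (\<bar>g t\<bar> powr p * \<phi> t) \<partial>lborel)
                 < ennreal C *
                   (\<integral>\<^sup>+ t\<in>{0<..<a}. ennreal (\<bar>u t\<bar> powr p * eta a p \<phi> t powr p * \<phi> t) \<partial>lborel)))"
proof -
  \<comment> \<open>Only continuity and positivity of \<open>\<phi>\<close> on \<open>(0, a]\<close> are needed.\<close>
  interpret hardy_weight a p \<phi>
    using assms by unfold_locales (auto elim: continuous_on_subset)
  show ?thesis
    using hardy_inequality hardy_constant_sharp by blast
qed


end
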